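(* In the setting of the context, let $(\sigma_t,\sigma'_t)_{t\ge0}$ be the monotone coupling started at $(\sigma,\sigma')$. Then for all $t\ge0$, \[ \mathbb E\sum_{i=1}^ma_i\,\mathrm{dist}(\sigma_t^{(i)},\sigma_t'^{(i)})\le\rho_n^t\sum_{i=1}^ma_i\,\mathrm{dist}(\sigma^{(i)},\sigma'^{(i)}), \] and, for each $1\le i\le m$, $\mathbb E\,\mathrm{dist}(\sigma_t^{(i)},\sigma_t'^{(i)})\le n\sqrt{p_i}\,\rho_n^t$.
   Context: Fix $m\ge1$, proportions $p_1,\dots,p_m>0$ with $\sum_ip_i=1$, a symmetric matrix $\mathbf K=(k_{ij})$ with all $k_{ij}>0$, and $\beta\ge0$; $n$ is a positive integer with $np_i\in\mathbb N$. The vertex set $V=\{1,\dots,n\}$ is partitioned into blocks $G_1,\dots,G_m$ with $|G_i|=np_i$; for $v\in G_i,w\in G_j$ put $K(v,w)=k_{ij}/n$. For $\sigma\in\Omega=\{-1,+1\}^V$ let $S^v(\sigma)=\sum_{w\ne v}K(v,w)\sigma(w)$ and $r_+(s)=\frac{1+\tanh(\beta s)}2$. The monotone coupling is the grand coupling of Glauber dynamics in which at each step a vertex $I$ uniform on $V$ and an independent $U$ uniform on $[0,1]$ are drawn (shared by all chains), and each chain in state $\sigma$ sets the spin at $I$ to $+1$ if $U\le r_+(S^I(\sigma))$ and to $-1$ otherwise. $\mathrm{dist}(\sigma^{(i)},\sigma'^{(i)})$ is the number of vertices of $G_i$ at which $\sigma,\sigma'$ differ. Let $\mathbf B=(p_ik_{ij})$,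 $\mathbf Q_n=(1-\frac1n)\mathbf I_m+\frac\beta n\mathbf B$, $\rho_n$ its largest (Perron) eigenvalue and $\mathbf a=(a_1,\dots,a_m)^\top>0$ its left Perron eigenvector normalized by $\|\mathbf a\|_1=1$. *)

theory Defs
  imports "HOL-Analysis.Analysis" "Jordan_Normal_Form.Char_Poly"
begin

text \<open>Vertices are 1..n; blocks are indexed 0..m-1; blk v is the block of vertex v.
  Spin configurations are functions nat => int (only values on 1..n matter).\<close>

definition Kint :: "nat \<Rightarrow> (nat \<Rightarrow> nat) \<Rightarrow> (nat \<Rightarrow> nat \<Rightarrow> real) \<Rightarrow> nat \<Rightarrow> nat \<Rightarrow> real" where
  "Kint n blk k v w = k (blk v) (blk w) / real n"

definition Sfield :: "nat \<Rightarrow> (nat \<Rightarrow> nat) \<Rightarrow> (nat \<Rightarrow> nat \<Rightarrow> real) \<Rightarrow> (nat \<Rightarrow> int) \<Rightarrow> nat \<Rightarrow> real" where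
  "Sfield n blk k \<sigma> v = (\<Sum>w\<in>{1..n} - {v}. Kint n blk k v w * real_of_int (\<sigma> w))"

definition rplus :: "real \<Rightarrow> real \<Rightarrow> real" where
  "rplus \<beta> s = (1 + tanh (\<beta> * s)) / 2"

definition glauber_upd ::
  "nat \<Rightarrow> (nat \<Rightarrow> nat) \<Rightarrow> (nat \<Rightarrow> nat \<Rightarrow> real) \<Rightarrow> real \<Rightarrow> (nat \<Rightarrow> int) \<Rightarrow> nat \<Rightarrow> real \<Rightarrow> (nat \<Rightarrow> int)" where
  "glauber_upd n blk k \<beta> \<sigma> v u =
     \<sigma>(v := (if u \<le> rplus \<beta> (Sfield n blk k \<sigma> v) then 1 else -1))"

text \<open>coup_E ... t f sigma sigma' is the expectation of f(sigma_t, sigma'_t) for the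
  monotone (grand) coupling started at (sigma, sigma'): at each step a vertex I uniform on
  {1..n} and an independent U uniform on [0,1] are drawn and shared by both chains.
  Defined via the Markov property (first-step decomposition).\<close>
fun coup_E ::
  "nat \<Rightarrow> (nat \<Rightarrow> nat) \<Rightarrow> (nat \<Rightarrow> nat \<Rightarrow> real) \<Rightarrow> real \<Rightarrow> nat \<Rightarrow>
   ((nat \<Rightarrow> int) \<Rightarrow> (nat \<Rightarrow> int) \<Rightarrow> real) \<Rightarrow> (nat \<Rightarrow> int) \<Rightarrow> (nat \<Rightarrow> int) \<Rightarrow> real" where
  "coup_E n blk k \<beta> 0 f \<sigma> \<sigma>' = f \<sigma> \<sigma>'"
| "coup_E n blk k \<beta> (Suc t) f \<sigma> \<sigma>' =
     (\<Sum>v\<in>{1..n}. integral {0..1::real}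
        (\<lambda>u. coup_E n blk k \<beta> t f (glauber_upd n blk k \<beta> \<sigma> v u) (glauber_upd n blk k \<beta> \<sigma>' v u)))
     / real n"

definition blk_dist :: "nat \<Rightarrow> (nat \<Rightarrow> nat) \<Rightarrow> nat \<Rightarrow> (nat \<Rightarrow> int) \<Rightarrow> (nat \<Rightarrow> int) \<Rightarrow> nat" where
  "blk_dist n blk i \<sigma> \<sigma>' = card {v\<in>{1..n}. blk v = i \<and> \<sigma> v \<noteq> \<sigma>' v}"

definition Bmat :: "nat \<Rightarrow> (nat \<Rightarrow> real) \<Rightarrow> (nat \<Rightarrow> nat \<Rightarrow> real) \<Rightarrow> real mat" where
  "Bmat m p k = mat m m (\<lambda>(i, j). p i * k i j)"

definition Qmat :: "nat \<Rightarrow> nat \<Rightarrow> (nat \<Rightarrow> real) \<Rightarrow> (nat \<Rightarrow> nat \<Rightarrow> real) \<Rightarrow> real \<Rightarrow> real mat" where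
  "Qmat m n p k \<beta> = (1 - 1 / real n) \<cdot>\<^sub>m 1\<^sub>m m + (\<beta> / real n) \<cdot>\<^sub>m Bmat m p k"

end

theory Submission
  imports Defs
begin

text \<open>
  Under the monotone coupling, an update at a vertex v creates a disagreement between the two
  chains with probability at most \<open>\<bar>r\<^sub>+(S\<^sup>v \<sigma>) - r\<^sub>+(S\<^sup>v \<sigma>')\<bar>\<close>, and since tanh is 1-Lipschitz
  this is at most \<open>\<beta>/n\<close> times the block-weighted number of disagreements seen from v. Hence one
  step of the coupling maps the expected weighted distance \<open>\<Sum>\<^sub>i c\<^sub>i dist\<^sub>i\<close>, for any nonnegative
  weights c, to at most \<open>\<Sum>\<^sub>i (c Q\<^sub>n)\<^sub>i dist\<^sub>i\<close>, and after t steps the weights are \<open>c Q\<^sub>n\<^sup>t\<close>.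
  For \<open>c = a\<close> these are \<open>\<rho>\<^sub>n\<^sup>t a\<close>. For \<open>c = e\<^sub>i\<close> note that \<open>Q\<^sub>n\<close> is self-adjoint in \<open>\<ell>\<^sup>2(p)\<close> because
  \<open>p\<^sub>i p\<^sub>j k\<^sub>i\<^sub>j\<close> is symmetric, so the Schur test with the positive left eigenvector a bounds its
  norm there by \<open>\<rho>\<^sub>n\<close>; Cauchy-Schwarz together with \<open>dist\<^sub>j \<le> n p\<^sub>j\<close> then gives \<open>n \<surd>p\<^sub>i \<rho>\<^sub>n\<^sup>t\<close>.
\<close>

lemma tanh_diff_le:
  fixes x y :: real
  assumes "x \<le> y"
  shows "tanh y - tanh x \<le> y - x"
proof -
  have "tanh y - y \<le> tanh x - x"
  proof (rule DERIV_nonpos_imp_nonincreasing[OF assms])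
    fix z :: real
    have "((\<lambda>z. tanh z - z) has_real_derivative (1 - tanh z ^ 2 - 1)) (at z)"
      by (auto intro!: derivative_eq_intros)
    then show "\<exists>d. ((\<lambda>z. tanh z - z) has_real_derivative d) (at z) \<and> d \<le> 0"
      by fastforce
  qed
  then show ?thesis by simp
qed

lemma abs_tanh_diff_le: "\<bar>tanh x - tanh y\<bar> \<le> \<bar>x - y\<bar>" for x y :: real
  using tanh_diff_le[of x y] tanh_diff_le[of y x] by (cases "x \<le> y") auto

lemma rplus_nonneg: "0 \<le> rplus \<beta> s"
  and rplus_le_one: "rplus \<beta> s \<le> 1"
  using tanh_real_bounds[of "\<beta> * s"] by (auto simp: rplus_def)

lemma abs_rplus_diff_le:
  assumes "\<beta> \<ge> 0"
  shows "\<bar>rplus \<beta> s - rplus \<beta> s'\<bar> \<le> \<beta> / 2 * \<bar>s - s'\<bar>"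
proof -
  have diff: "rplus \<beta> s - rplus \<beta> s' = (tanh (\<beta> * s) - tanh (\<beta> * s')) / 2"
    by (simp add: rplus_def field_simps)
  have "\<bar>rplus \<beta> s - rplus \<beta> s'\<bar> = \<bar>tanh (\<beta> * s) - tanh (\<beta> * s')\<bar> / 2"
    unfolding diff by simp
  also have "\<dots> \<le> \<bar>\<beta> * s - \<beta> * s'\<bar> / 2"
    using abs_tanh_diff_le by (intro divide_right_mono) auto
  also have "\<dots> = \<beta> / 2 * \<bar>s - s'\<bar>"
    using assms by (simp add: abs_mult flip: right_diff_distrib)
  finally show ?thesis .
qed

definition mono_coupling_exp :: "(bool \<Rightarrow> bool \<Rightarrow> real) \<Rightarrow> real \<Rightarrow> real \<Rightarrow> real" where
  "mono_coupling_exp F r r' = F True True * min r r' + F True False * max 0 (r - r')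
     + F False True * max 0 (r' - r) + F False False * (1 - max r r')"

lemma has_integral_two_thresholds:
  fixes F :: "bool \<Rightarrow> bool \<Rightarrow> real" and r r' :: real
  assumes "0 \<le> r" "r \<le> r'" "r' \<le> 1"
  shows "((\<lambda>u. F (u \<le> r) (u \<le> r')) has_integral
           (F True True * r + F False True * (r' - r) + F False False * (1 - r'))) {0..1}"
proof -
  have 1: "((\<lambda>u. F (u \<le> r) (u \<le> r')) has_integral (F True True * r)) {0..r}"
    by (rule has_integral_spike_finite[where S = "{}" and f = "\<lambda>u. F True True"])
      (use assms has_integral_const_real[of "F True True" 0 r] in \<open>auto simp: mult.commute\<close>)
  have 2: "((\<lambda>u. F (u \<le> r) (u \<le> r')) has_integral (F False True * (r' - r))) {r..r'}"
    by (rule has_integral_spike_finite[where S = "{r}" and f = "\<lambda>u. F False True"])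
      (use assms has_integral_const_real[of "F False True" r r'] in \<open>auto simp: mult.commute\<close>)
  have 3: "((\<lambda>u. F (u \<le> r) (u \<le> r')) has_integral (F False False * (1 - r'))) {r'..1}"
    by (rule has_integral_spike_finite[where S = "{r'}" and f = "\<lambda>u. F False False"])
      (use assms has_integral_const_real[of "F False False" r' 1] in \<open>auto simp: mult.commute\<close>)
  have "((\<lambda>u. F (u \<le> r) (u \<le> r')) has_integral
      (F True True * r + F False True * (r' - r))) {0..r'}"
    using has_integral_combine[OF assms(1,2) 1 2] .
  from has_integral_combine[OF _ assms(3) this 3] assms show ?thesis by simp
qed

lemma integral_two_thresholds:
  assumes "0 \<le> r" "r \<le> 1" "0 \<le> r'" "r' \<le> 1"
  shows "integral {0..1} (\<lambda>u. F (u \<le> r) (u \<le> r')) = mono_coupling_exp F r r'"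
proof (cases "r \<le> r'")
  case True
  with has_integral_two_thresholds[OF assms(1) True assms(4), of F] show ?thesis
    by (simp add: mono_coupling_exp_def integral_unique)
next
  case False
  with has_integral_two_thresholds[OF assms(3) _ assms(2), of "\<lambda>x y. F y x"] show ?thesis
    by (simp add: mono_coupling_exp_def integral_unique)
qed

lemma mono_coupling_exp_mono:
  assumes "0 \<le> r" "r \<le> 1" "0 \<le> r'" "r' \<le> 1" "\<And>x y. F x y \<le> G x y"
  shows "mono_coupling_exp F r r' \<le> mono_coupling_exp G r r'"
  unfolding mono_coupling_exp_def using assms by (intro add_mono mult_right_mono) auto

lemma mono_coupling_exp_disagreement:
  assumes "0 \<le> r" "r \<le> 1" "0 \<le> r'" "r' \<le> 1"
  shows "mono_coupling_exp (\<lambda>x y. A + B * (if x = y then 0 else 1)) r r' = A + B * \<bar>r - r'\<bar>"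
  unfolding mono_coupling_exp_def using assms
  by (cases "r \<le> r'") (auto simp: algebra_simps min_def max_def)

definition spin :: "bool \<Rightarrow> int" where
  "spin x = (if x then 1 else -1)"

definition spin_config :: "nat \<Rightarrow> (nat \<Rightarrow> int) \<Rightarrow> bool" where
  "spin_config n \<sigma> \<longleftrightarrow> (\<forall>v\<in>{1..n}. \<sigma> v \<in> {-1, 1})"

lemma spin_config_upd: "spin_config n \<sigma> \<Longrightarrow> spin_config n (\<sigma>(v := spin x))"
  by (auto simp: spin_config_def spin_def)

lemma coup_E_Suc_mono_coupling:
  "coup_E n blk k \<beta> (Suc t) f \<sigma> \<sigma>' =
    (\<Sum>v\<in>{1..n}. mono_coupling_exp
        (\<lambda>x y. coup_E n blk k \<beta> t f (\<sigma>(v := spin x)) (\<sigma>'(v := spin y)))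
        (rplus \<beta> (Sfield n blk k \<sigma> v)) (rplus \<beta> (Sfield n blk k \<sigma>' v))) / real n"
proof -
  have "integral {0..1::real}
      (\<lambda>u. coup_E n blk k \<beta> t f (glauber_upd n blk k \<beta> \<sigma> v u) (glauber_upd n blk k \<beta> \<sigma>' v u))
    = mono_coupling_exp (\<lambda>x y. coup_E n blk k \<beta> t f (\<sigma>(v := spin x)) (\<sigma>'(v := spin y)))
        (rplus \<beta> (Sfield n blk k \<sigma> v)) (rplus \<beta> (Sfield n blk k \<sigma>' v))" for v
    using integral_two_thresholds[OF rplus_nonneg rplus_le_one rplus_nonneg rplus_le_one,
        of "\<lambda>x y. coup_E n blk k \<beta> t f (\<sigma>(v := spin x)) (\<sigma>'(v := spin y))"]
    unfolding glauber_upd_def spin_def by simp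
  then show ?thesis by simp
qed

lemma coup_E_Suc_eq_coup_E_one:
  "coup_E n blk k \<beta> (Suc t) f = coup_E n blk k \<beta> 1 (coup_E n blk k \<beta> t f)"
  by (intro ext) (simp only: One_nat_def coup_E_Suc_mono_coupling coup_E.simps(1))

lemma coup_E_one_mono:
  assumes "spin_config n \<sigma>" "spin_config n \<sigma>'"
    and "\<And>s s'. spin_config n s \<Longrightarrow> spin_config n s' \<Longrightarrow> f s s' \<le> g s s'"
  shows "coup_E n blk k \<beta> 1 f \<sigma> \<sigma>' \<le> coup_E n blk k \<beta> 1 g \<sigma> \<sigma>'"
  unfolding One_nat_def coup_E_Suc_mono_coupling coup_E.simps(1) using assms(1,2)
  by (intro divide_right_mono sum_mono mono_coupling_exp_mono rplus_nonneg rplus_le_one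
      assms(3) spin_config_upd) auto

lemma sum_by_blocks:
  fixes G :: "nat \<Rightarrow> real"
  assumes "finite V" "\<forall>v\<in>V. blk v < m"
  shows "(\<Sum>v\<in>V. G (blk v) * (if P v then 1 else 0)) =
         (\<Sum>i<m. G i * real (card {v\<in>V. blk v = i \<and> P v}))"
proof -
  have block: "(\<Sum>v\<in>{v\<in>V. blk v = i}. G (blk v) * (if P v then 1 else 0))
      = G i * real (card {v\<in>V. blk v = i \<and> P v})" for i
  proof -
    have "(\<Sum>v\<in>{v\<in>V. blk v = i}. G (blk v) * (if P v then 1 else 0))
        = (\<Sum>v\<in>{v\<in>V. blk v = i}. if P v then G i else 0)"
      by (rule sum.cong) auto
    also have "\<dots> = (\<Sum>v\<in>{v\<in>{v\<in>V. blk v = i}. P v}. G i)"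
      by (rule sum.inter_filter[symmetric]) (use assms(1) in auto)
    also have "{v\<in>{v\<in>V. blk v = i}. P v} = {v\<in>V. blk v = i \<and> P v}"
      by auto
    finally show ?thesis by simp
  qed
  have "(\<Sum>v\<in>V. G (blk v) * (if P v then 1 else 0)) =
      (\<Sum>i<m. \<Sum>v\<in>{v\<in>V. blk v = i}. G (blk v) * (if P v then 1 else 0))"
    using assms by (intro sum.group[symmetric]) auto
  then show ?thesis by (simp only: block)
qed

lemma blk_dist_upd:
  assumes "v \<in> {1..n}"
  shows "real (blk_dist n blk i (\<sigma>(v := x)) (\<sigma>'(v := y))) =
    real (blk_dist n blk i \<sigma> \<sigma>') - (if blk v = i \<and> \<sigma> v \<noteq> \<sigma>' v then 1 else 0)
      + (if blk v = i \<and> x \<noteq> y then 1 else 0)"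
proof -
  define A where "A = {w\<in>{1..n}. blk w = i \<and> \<sigma> w \<noteq> \<sigma>' w}"
  define A' where "A' = {w\<in>{1..n}. blk w = i \<and> (\<sigma>(v := x)) w \<noteq> (\<sigma>'(v := y)) w}"
  have "finite A" "finite A'"
    by (auto simp: A_def A'_def)
  then have "real (card A) = real (card (A - {v})) + (if v \<in> A then 1 else 0)"
    and "real (card A') = real (card (A' - {v})) + (if v \<in> A' then 1 else 0)"
    using card.remove[of A v] card.remove[of A' v] by auto
  moreover have "A - {v} = A' - {v}"
    by (auto simp: A_def A'_def)
  moreover have "v \<in> A \<longleftrightarrow> blk v = i \<and> \<sigma> v \<noteq> \<sigma>' v" "v \<in> A' \<longleftrightarrow> blk v = i \<and> x \<noteq> y"
    using assms by (auto simp: A_def A'_def)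
  ultimately show ?thesis
    unfolding blk_dist_def A_def[symmetric] A'_def[symmetric] by simp
qed

definition wdist ::
  "nat \<Rightarrow> (nat \<Rightarrow> nat) \<Rightarrow> nat \<Rightarrow> (nat \<Rightarrow> real) \<Rightarrow> (nat \<Rightarrow> int) \<Rightarrow> (nat \<Rightarrow> int) \<Rightarrow> real" where
  "wdist n blk m c \<sigma> \<sigma>' = (\<Sum>i<m. c i * real (blk_dist n blk i \<sigma> \<sigma>'))"

lemma wdist_upd_spin:
  assumes "v \<in> {1..n}" "blk v < m"
  shows "wdist n blk m c (\<sigma>(v := spin x)) (\<sigma>'(v := spin y)) =
     (wdist n blk m c \<sigma> \<sigma>' - c (blk v) * (if \<sigma> v \<noteq> \<sigma>' v then 1 else 0))
       + c (blk v) * (if x = y then 0 else 1)"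
proof -
  have delta: "(\<Sum>i<m. c i * (if blk v = i \<and> Q then 1 else 0)) = c (blk v) * (if Q then 1 else 0)"
    for Q
  proof -
    have "(\<Sum>i<m. c i * (if blk v = i \<and> Q then 1 else 0))
        = (\<Sum>i<m. if i = blk v then c (blk v) * (if Q then 1 else 0) else 0)"
      by (rule sum.cong) auto
    then show ?thesis using assms(2) by simp
  qed
  have "wdist n blk m c (\<sigma>(v := spin x)) (\<sigma>'(v := spin y)) =
      (\<Sum>i<m. c i * real (blk_dist n blk i \<sigma> \<sigma>')
         - c i * (if blk v = i \<and> \<sigma> v \<noteq> \<sigma>' v then 1 else 0)
         + c i * (if blk v = i \<and> spin x \<noteq> spin y then 1 else 0))"
    unfolding wdist_def by (rule sum.cong[OF refl]) (simp add: blk_dist_upd[OF assms(1)] algebra_simps)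
  also have "\<dots> = wdist n blk m c \<sigma> \<sigma>'
      - (\<Sum>i<m. c i * (if blk v = i \<and> \<sigma> v \<noteq> \<sigma>' v then 1 else 0))
      + (\<Sum>i<m. c i * (if blk v = i \<and> spin x \<noteq> spin y then 1 else 0))"
    by (simp add: sum.distrib sum_subtractf wdist_def)
  also have "spin x \<noteq> spin y \<longleftrightarrow> x \<noteq> y"
    by (auto simp: spin_def)
  finally show ?thesis
    by (simp only: delta) simp
qed

definition row_mult :: "nat \<Rightarrow> (nat \<Rightarrow> nat \<Rightarrow> real) \<Rightarrow> (nat \<Rightarrow> real) \<Rightarrow> nat \<Rightarrow> real" where
  "row_mult m Q c j = (\<Sum>i<m. c i * Q i j)"

definition wsqnorm :: "nat \<Rightarrow> (nat \<Rightarrow> real) \<Rightarrow> (nat \<Rightarrow> real) \<Rightarrow> real" where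
  "wsqnorm m p c = (\<Sum>j<m. p j * (c j)\<^sup>2)"

lemma row_mult_funpow_nonneg:
  assumes "\<forall>i<m. \<forall>j<m. Q i j \<ge> 0" "\<forall>i<m. c i \<ge> 0"
  shows "\<forall>j<m. (row_mult m Q ^^ t) c j \<ge> 0"
  by (induction t) (use assms in \<open>auto simp: row_mult_def intro!: sum_nonneg\<close>)

lemma row_mult_funpow_left_eigvec:
  assumes "\<forall>j<m. row_mult m Q a j = \<rho> * a j"
  shows "\<forall>j<m. (row_mult m Q ^^ t) a j = \<rho> ^ t * a j"
proof (induction t)
  case 0
  then show ?case by simp
next
  case (Suc t)
  have "(row_mult m Q ^^ Suc t) a j = row_mult m Q (\<lambda>i. \<rho> ^ t * a i) j" for j
    using Suc by (simp add: row_mult_def[of m Q "(row_mult m Q ^^ t) a"] row_mult_def[of m Q "\<lambda>i. \<rho> ^ t * a i"])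
  also have "row_mult m Q (\<lambda>i. \<rho> ^ t * a i) j = \<rho> ^ t * row_mult m Q a j" for j
    by (simp add: row_mult_def sum_distrib_left mult.assoc)
  finally show ?case
    using assms by simp
qed

lemma left_eigval_nonneg:
  assumes "\<forall>j<m. row_mult m Q a j = \<rho> * a j" "\<forall>i<m. \<forall>j<m. Q i j \<ge> 0" "\<forall>i<m. a i > 0"
    and "j < m"
  shows "\<rho> \<ge> 0"
proof -
  have "0 \<le> row_mult m Q a j"
    unfolding row_mult_def using assms(2-4) by (intro sum_nonneg) (simp add: less_imp_le)
  moreover have "a j > 0"
    using assms(3,4) by simp
  ultimately show ?thesis
    using assms(1,4) by (simp add: zero_le_mult_iff)
qed

lemma weighted_Cauchy_Schwarz:
  fixes w z :: "nat \<Rightarrow> real"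
  assumes "\<forall>i\<in>I. w i \<ge> 0"
  shows "(\<Sum>i\<in>I. w i * z i)\<^sup>2 \<le> (\<Sum>i\<in>I. w i) * (\<Sum>i\<in>I. w i * (z i)\<^sup>2)"
proof -
  have "(\<Sum>i\<in>I. sqrt (w i) * (sqrt (w i) * z i))\<^sup>2
      \<le> (\<Sum>i\<in>I. (sqrt (w i))\<^sup>2) * (\<Sum>i\<in>I. (sqrt (w i) * z i)\<^sup>2)"
    by (rule Cauchy_Schwarz_ineq_sum)
  moreover have "(\<Sum>i\<in>I. sqrt (w i) * (sqrt (w i) * z i)) = (\<Sum>i\<in>I. w i * z i)"
    using assms by (intro sum.cong) (auto simp flip: mult.assoc)
  moreover have "(\<Sum>i\<in>I. (sqrt (w i))\<^sup>2) = (\<Sum>i\<in>I. w i)"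
    using assms by (intro sum.cong) auto
  moreover have "(\<Sum>i\<in>I. (sqrt (w i) * z i)\<^sup>2) = (\<Sum>i\<in>I. w i * (z i)\<^sup>2)"
    using assms by (intro sum.cong) (auto simp: power_mult_distrib)
  ultimately show ?thesis by simp
qed

lemma sum_le_sqrt_wsqnorm:
  assumes "\<forall>j<m. p j \<ge> 0" "(\<Sum>j<m. p j) = 1"
  shows "(\<Sum>j<m. p j * c j) \<le> sqrt (wsqnorm m p c)"
proof (rule real_le_rsqrt)
  show "(\<Sum>j<m. p j * c j)\<^sup>2 \<le> wsqnorm m p c"
    using weighted_Cauchy_Schwarz[of "{..<m}" p c] assms by (simp add: wsqnorm_def)
qed

text \<open>The Schur test; \<open>reversible\<close> says that Q is self-adjoint in \<open>\<ell>\<^sup>2(p)\<close>.\<close>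
lemma wsqnorm_row_mult_le:
  assumes eig: "\<forall>j<m. row_mult m Q a j = \<rho> * a j"
    and reversible: "\<forall>i<m. \<forall>j<m. p j * Q i j = p i * Q j i"
    and Q_nonneg: "\<forall>i<m. \<forall>j<m. Q i j \<ge> 0"
    and a_pos: "\<forall>i<m. a i > 0" and p_nonneg: "\<forall>i<m. p i \<ge> 0"
  shows "wsqnorm m p (row_mult m Q c) \<le> \<rho>\<^sup>2 * wsqnorm m p c"
proof -
  have entry: "(row_mult m Q c j)\<^sup>2 \<le> \<rho> * a j * (\<Sum>i<m. Q i j * ((c i)\<^sup>2 / a i))"
    if j: "j < m" for j
  proof -
    have "row_mult m Q c j = (\<Sum>i<m. (a i * Q i j) * (c i / a i))"
      unfolding row_mult_def using a_pos by (intro sum.cong) (auto simp: field_simps)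
    then have "(row_mult m Q c j)\<^sup>2
        \<le> (\<Sum>i<m. a i * Q i j) * (\<Sum>i<m. (a i * Q i j) * (c i / a i)\<^sup>2)"
      using weighted_Cauchy_Schwarz[of "{..<m}" "\<lambda>i. a i * Q i j" "\<lambda>i. c i / a i"] a_pos Q_nonneg j
      by (simp add: less_imp_le)
    also have "(\<Sum>i<m. (a i * Q i j) * (c i / a i)\<^sup>2) = (\<Sum>i<m. Q i j * ((c i)\<^sup>2 / a i))"
      using a_pos by (intro sum.cong) (auto simp: field_simps power2_eq_square)
    finally show ?thesis
      using eig j by (simp add: row_mult_def)
  qed
  have "wsqnorm m p (row_mult m Q c) \<le> (\<Sum>j<m. p j * (\<rho> * a j * (\<Sum>i<m. Q i j * ((c i)\<^sup>2 / a i))))"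
    unfolding wsqnorm_def using entry p_nonneg by (intro sum_mono mult_left_mono) auto
  also have "\<dots> = \<rho> * (\<Sum>j<m. \<Sum>i<m. a j * (p j * Q i j) * ((c i)\<^sup>2 / a i))"
    by (simp add: sum_distrib_left sum_distrib_right mult_ac)
  also have "\<dots> = \<rho> * (\<Sum>i<m. \<Sum>j<m. a j * (p i * Q j i) * ((c i)\<^sup>2 / a i))"
    by (subst sum.swap) (use reversible in \<open>auto intro!: sum.cong\<close>)
  also have "\<dots> = \<rho> * (\<Sum>i<m. p i * ((c i)\<^sup>2 / a i) * row_mult m Q a i)"
    by (simp add: row_mult_def sum_distrib_left sum_distrib_right sum_divide_distrib mult_ac)
  also have "\<dots> = \<rho>\<^sup>2 * wsqnorm m p c"
    unfolding wsqnorm_def using eig a_pos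
    by (simp add: sum_distrib_left power2_eq_square) (intro sum.cong, auto simp: field_simps)
  finally show ?thesis .
qed

lemma wsqnorm_row_mult_funpow_le:
  assumes "\<forall>j<m. row_mult m Q a j = \<rho> * a j"
    and "\<forall>i<m. \<forall>j<m. p j * Q i j = p i * Q j i"
    and "\<forall>i<m. \<forall>j<m. Q i j \<ge> 0" "\<forall>i<m. a i > 0" "\<forall>i<m. p i \<ge> 0"
  shows "wsqnorm m p ((row_mult m Q ^^ t) c) \<le> (\<rho>\<^sup>2) ^ t * wsqnorm m p c"
proof (induction t)
  case 0
  then show ?case by simp
next
  case (Suc t)
  have "wsqnorm m p ((row_mult m Q ^^ Suc t) c) \<le> \<rho>\<^sup>2 * wsqnorm m p ((row_mult m Q ^^ t) c)"
    using wsqnorm_row_mult_le[OF assms] by simp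
  also have "\<dots> \<le> \<rho>\<^sup>2 * ((\<rho>\<^sup>2) ^ t * wsqnorm m p c)"
    using Suc by (intro mult_left_mono) auto
  finally show ?case by simp
qed

definition Qent :: "nat \<Rightarrow> (nat \<Rightarrow> real) \<Rightarrow> (nat \<Rightarrow> nat \<Rightarrow> real) \<Rightarrow> real \<Rightarrow> nat \<Rightarrow> nat \<Rightarrow> real" where
  "Qent n p k \<beta> i j = (if i = j then 1 - 1 / real n else 0) + \<beta> / real n * (p i * k i j)"

lemma Qmat_left_eigvec:
  assumes "a \<in> carrier_vec m" "transpose_mat (Qmat m n p k \<beta>) *\<^sub>v a = \<rho> \<cdot>\<^sub>v a"
  shows "\<forall>j<m. row_mult m (Qent n p k \<beta>) (\<lambda>i. a $ i) j = \<rho> * a $ j"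
proof (intro allI impI)
  fix j assume j: "j < m"
  have "(transpose_mat (Qmat m n p k \<beta>) *\<^sub>v a) $ j = (\<rho> \<cdot>\<^sub>v a) $ j"
    using assms(2) by simp
  then have "(\<Sum>i = 0..<m. Qmat m n p k \<beta> $$ (i, j) * a $ i) = \<rho> * a $ j"
    using assms(1) j by (simp add: scalar_prod_def Qmat_def Bmat_def)
  moreover have "Qmat m n p k \<beta> $$ (i, j) = Qent n p k \<beta> i j" if "i < m" for i
    using that j by (simp add: Qmat_def Bmat_def Qent_def)
  ultimately show "row_mult m (Qent n p k \<beta>) (\<lambda>i. a $ i) j = \<rho> * a $ j"
    by (simp add: row_mult_def lessThan_atLeast0 mult.commute)
qed

lemma Qent_reversible:
  assumes "k i j = k j i"
  shows "p j * Qent n p k \<beta> i j = p i * Qent n p k \<beta> j i"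
  using assms by (auto simp: Qent_def algebra_simps)

lemma wdist_row_mult_Qent:
  "wdist n blk m (row_mult m (Qent n p k \<beta>) c) \<sigma> \<sigma>' =
     (1 - 1 / real n) * wdist n blk m c \<sigma> \<sigma>'
     + \<beta> / real n * (\<Sum>i<m. c i * p i * (\<Sum>j<m. k i j * real (blk_dist n blk j \<sigma> \<sigma>')))"
proof -
  let ?D = "\<lambda>j. real (blk_dist n blk j \<sigma> \<sigma>')"
  have row: "(\<Sum>j<m. c i * Qent n p k \<beta> i j * ?D j)
      = (1 - 1 / real n) * (c i * ?D i) + \<beta> / real n * (c i * p i * (\<Sum>j<m. k i j * ?D j))"
    if "i < m" for i
  proof -
    have "(\<Sum>j<m. c i * Qent n p k \<beta> i j * ?D j) = (\<Sum>j<m.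
        (if j = i then (1 - 1 / real n) * (c i * ?D i) else 0)
        + \<beta> / real n * (c i * p i) * (k i j * ?D j))"
      by (rule sum.cong[OF refl]) (auto simp: Qent_def algebra_simps)
    then show ?thesis
      using that by (simp add: sum.distrib sum_distrib_left mult.assoc)
  qed
  have "wdist n blk m (row_mult m (Qent n p k \<beta>) c) \<sigma> \<sigma>'
      = (\<Sum>i<m. \<Sum>j<m. c i * Qent n p k \<beta> i j * ?D j)"
    unfolding wdist_def row_mult_def sum_distrib_right by (rule sum.swap)
  also have "\<dots> = (\<Sum>i<m. (1 - 1 / real n) * (c i * ?D i)
      + \<beta> / real n * (c i * p i * (\<Sum>j<m. k i j * ?D j)))"
    by (rule sum.cong[OF refl]) (simp add: row)
  finally show ?thesis
    by (simp add: sum.distrib wdist_def sum_distrib_left)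
qed

locale block_glauber =
  fixes m n :: nat and p :: "nat \<Rightarrow> real" and k :: "nat \<Rightarrow> nat \<Rightarrow> real" and \<beta> :: real
    and blk :: "nat \<Rightarrow> nat"
  assumes n_pos: "n \<ge> 1"
    and blk_less: "\<forall>v\<in>{1..n}. blk v < m"
    and p_pos: "\<forall>i<m. p i > 0"
    and k_pos: "\<forall>i<m. \<forall>j<m. k i j > 0"
    and beta_nonneg: "\<beta> \<ge> 0"
    and card_block: "\<forall>i<m. real (card {v\<in>{1..n}. blk v = i}) = real n * p i"
begin

lemma Qent_nonneg: "\<forall>i<m. \<forall>j<m. Qent n p k \<beta> i j \<ge> 0"
proof (intro allI impI)
  fix i j assume "i < m" "j < m"
  then have "p i > 0" "k i j > 0"
    using p_pos k_pos by auto
  moreover have "1 / real n \<le> 1"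
    using n_pos by simp
  ultimately show "Qent n p k \<beta> i j \<ge> 0"
    unfolding Qent_def using beta_nonneg
    by (intro add_nonneg_nonneg mult_nonneg_nonneg divide_nonneg_nonneg) auto
qed

lemma Sfield_diff_le:
  assumes "spin_config n \<sigma>" "spin_config n \<sigma>'" "v \<in> {1..n}"
  shows "\<bar>Sfield n blk k \<sigma> v - Sfield n blk k \<sigma>' v\<bar>
    \<le> 2 / real n * (\<Sum>j<m. k (blk v) j * real (blk_dist n blk j \<sigma> \<sigma>'))"
proof -
  let ?d = "\<lambda>w. (if \<sigma> w \<noteq> \<sigma>' w then 1 else 0) :: real"
  have K_nonneg: "Kint n blk k v w \<ge> 0" if "w \<in> {1..n}" for w
    using blk_less k_pos assms(3) that by (auto simp: Kint_def intro!: less_imp_le)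
  have spin_diff: "\<bar>real_of_int (\<sigma> w) - real_of_int (\<sigma>' w)\<bar> = 2 * ?d w" if "w \<in> {1..n}" for w
  proof -
    have "\<sigma> w = -1 \<or> \<sigma> w = 1" "\<sigma>' w = -1 \<or> \<sigma>' w = 1"
      using assms(1,2) that by (auto simp: spin_config_def)
    then show ?thesis by auto
  qed
  have "\<bar>Sfield n blk k \<sigma> v - Sfield n blk k \<sigma>' v\<bar>
      = \<bar>\<Sum>w\<in>{1..n} - {v}. Kint n blk k v w * (real_of_int (\<sigma> w) - real_of_int (\<sigma>' w))\<bar>"
    by (simp add: Sfield_def sum_subtractf[symmetric] algebra_simps)
  also have "\<dots> \<le> (\<Sum>w\<in>{1..n} - {v}. Kint n blk k v w * (2 * ?d w))"
    using K_nonneg spin_diff by (intro order_trans[OF sum_abs] sum_mono) (simp add: abs_mult)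
  also have "\<dots> \<le> (\<Sum>w\<in>{1..n}. Kint n blk k v w * (2 * ?d w))"
    using K_nonneg by (intro sum_mono2) auto
  also have "\<dots> = 2 / real n * (\<Sum>w\<in>{1..n}. k (blk v) (blk w) * ?d w)"
    unfolding Kint_def sum_distrib_left by (rule sum.cong) auto
  also have "(\<Sum>w\<in>{1..n}. k (blk v) (blk w) * ?d w) = (\<Sum>j<m. k (blk v) j * real (blk_dist n blk j \<sigma> \<sigma>'))"
    unfolding blk_dist_def using blk_less by (intro sum_by_blocks) auto
  finally show ?thesis .
qed

lemma abs_rplus_Sfield_diff_le:
  assumes "spin_config n \<sigma>" "spin_config n \<sigma>'" "v \<in> {1..n}"
  shows "\<bar>rplus \<beta> (Sfield n blk k \<sigma> v) - rplus \<beta> (Sfield n blk k \<sigma>' v)\<bar>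
    \<le> \<beta> / real n * (\<Sum>j<m. k (blk v) j * real (blk_dist n blk j \<sigma> \<sigma>'))"
proof -
  have "\<bar>rplus \<beta> (Sfield n blk k \<sigma> v) - rplus \<beta> (Sfield n blk k \<sigma>' v)\<bar>
      \<le> \<beta> / 2 * \<bar>Sfield n blk k \<sigma> v - Sfield n blk k \<sigma>' v\<bar>"
    by (rule abs_rplus_diff_le[OF beta_nonneg])
  also have "\<dots> \<le> \<beta> / 2 * (2 / real n * (\<Sum>j<m. k (blk v) j * real (blk_dist n blk j \<sigma> \<sigma>')))"
    using Sfield_diff_le[OF assms] beta_nonneg by (intro mult_left_mono) auto
  finally show ?thesis
    by simp
qed

lemma coup_E_one_wdist:
  "coup_E n blk k \<beta> 1 (wdist n blk m c) \<sigma> \<sigma>' =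
     (1 - 1 / real n) * wdist n blk m c \<sigma> \<sigma>'
     + (\<Sum>v\<in>{1..n}. c (blk v) *
          \<bar>rplus \<beta> (Sfield n blk k \<sigma> v) - rplus \<beta> (Sfield n blk k \<sigma>' v)\<bar>) / real n"
proof -
  let ?d = "\<lambda>v. (if \<sigma> v \<noteq> \<sigma>' v then 1 else 0) :: real"
  let ?r = "\<lambda>\<tau> v. rplus \<beta> (Sfield n blk k \<tau> v)"
  let ?F = "wdist n blk m c \<sigma> \<sigma>'"
  have "coup_E n blk k \<beta> 1 (wdist n blk m c) \<sigma> \<sigma>'
      = (\<Sum>v\<in>{1..n}. (?F - c (blk v) * ?d v) + c (blk v) * \<bar>?r \<sigma> v - ?r \<sigma>' v\<bar>) / real n"
    unfolding One_nat_def coup_E_Suc_mono_coupling coup_E.simps(1)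
    using blk_less
    by (simp add: wdist_upd_spin mono_coupling_exp_disagreement rplus_nonneg rplus_le_one)
  also have "\<dots> = (real n * ?F - (\<Sum>v\<in>{1..n}. c (blk v) * ?d v)
      + (\<Sum>v\<in>{1..n}. c (blk v) * \<bar>?r \<sigma> v - ?r \<sigma>' v\<bar>)) / real n"
    by (simp add: sum.distrib sum_subtractf)
  also have "(\<Sum>v\<in>{1..n}. c (blk v) * ?d v) = ?F"
    unfolding wdist_def blk_dist_def using blk_less by (intro sum_by_blocks) auto
  also have "(real n * ?F - ?F + (\<Sum>v\<in>{1..n}. c (blk v) * \<bar>?r \<sigma> v - ?r \<sigma>' v\<bar>)) / real n
      = (1 - 1 / real n) * ?F + (\<Sum>v\<in>{1..n}. c (blk v) * \<bar>?r \<sigma> v - ?r \<sigma>' v\<bar>) / real n"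
    using n_pos by (simp add: field_simps)
  finally show ?thesis .
qed

lemma coup_E_one_wdist_le:
  assumes "\<forall>i<m. c i \<ge> 0" "spin_config n \<sigma>" "spin_config n \<sigma>'"
  shows "coup_E n blk k \<beta> 1 (wdist n blk m c) \<sigma> \<sigma>'
    \<le> wdist n blk m (row_mult m (Qent n p k \<beta>) c) \<sigma> \<sigma>'"
proof -
  let ?H = "\<lambda>i. \<Sum>j<m. k i j * real (blk_dist n blk j \<sigma> \<sigma>')"
  let ?r = "\<lambda>\<tau> v. rplus \<beta> (Sfield n blk k \<tau> v)"
  have "(\<Sum>v\<in>{1..n}. c (blk v) * \<bar>?r \<sigma> v - ?r \<sigma>' v\<bar>)
      \<le> (\<Sum>v\<in>{1..n}. c (blk v) * (\<beta> / real n * ?H (blk v)) * (if True then 1 else 0))"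
  proof (rule sum_mono)
    fix v assume v: "v \<in> {1..n}"
    have "c (blk v) \<ge> 0"
      using assms(1) blk_less v by auto
    from mult_left_mono[OF abs_rplus_Sfield_diff_le[OF assms(2,3) v] this]
    show "c (blk v) * \<bar>?r \<sigma> v - ?r \<sigma>' v\<bar>
        \<le> c (blk v) * (\<beta> / real n * ?H (blk v)) * (if True then 1 else 0)"
      by simp
  qed
  also have "\<dots> = (\<Sum>i<m. c i * (\<beta> / real n * ?H i) * real (card {v\<in>{1..n}. blk v = i \<and> True}))"
    using blk_less by (intro sum_by_blocks) auto
  also have "\<dots> = real n * (\<beta> / real n * (\<Sum>i<m. c i * p i * ?H i))"
    using card_block by (simp add: sum_distrib_left mult_ac)
  finally have "(\<Sum>v\<in>{1..n}. c (blk v) * \<bar>?r \<sigma> v - ?r \<sigma>' v\<bar>) / real n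
      \<le> \<beta> / real n * (\<Sum>i<m. c i * p i * ?H i)"
    using n_pos by (simp add: divide_le_eq mult.commute)
  then show ?thesis
    unfolding coup_E_one_wdist wdist_row_mult_Qent by simp
qed

lemma coup_E_wdist_le:
  assumes "\<forall>i<m. c i \<ge> 0" "spin_config n \<sigma>" "spin_config n \<sigma>'"
  shows "coup_E n blk k \<beta> t (wdist n blk m c) \<sigma> \<sigma>'
    \<le> wdist n blk m ((row_mult m (Qent n p k \<beta>) ^^ t) c) \<sigma> \<sigma>'"
  using assms(2,3)
proof (induction t arbitrary: \<sigma> \<sigma>')
  case 0
  then show ?case by simp
next
  case (Suc t)
  let ?c = "(row_mult m (Qent n p k \<beta>) ^^ t) c"
  have "coup_E n blk k \<beta> (Suc t) (wdist n blk m c) \<sigma> \<sigma>'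
      = coup_E n blk k \<beta> 1 (coup_E n blk k \<beta> t (wdist n blk m c)) \<sigma> \<sigma>'"
    by (simp only: coup_E_Suc_eq_coup_E_one)
  also have "\<dots> \<le> coup_E n blk k \<beta> 1 (wdist n blk m ?c) \<sigma> \<sigma>'"
    by (rule coup_E_one_mono[OF Suc.prems Suc.IH])
  also have "\<dots> \<le> wdist n blk m (row_mult m (Qent n p k \<beta>) ?c) \<sigma> \<sigma>'"
    using row_mult_funpow_nonneg[OF Qent_nonneg assms(1)]
    by (intro coup_E_one_wdist_le Suc.prems) blast
  finally show ?case by simp
qed

lemma wdist_le_sqrt_wsqnorm:
  assumes "\<forall>i<m. c i \<ge> 0" "(\<Sum>i<m. p i) = 1"
  shows "wdist n blk m c \<sigma> \<sigma>' \<le> real n * sqrt (wsqnorm m p c)"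
proof -
  have "real (blk_dist n blk j \<sigma> \<sigma>') \<le> real n * p j" if "j < m" for j
  proof -
    have "blk_dist n blk j \<sigma> \<sigma>' \<le> card {v\<in>{1..n}. blk v = j}"
      unfolding blk_dist_def by (rule card_mono) auto
    then show ?thesis using card_block that by force
  qed
  then have "wdist n blk m c \<sigma> \<sigma>' \<le> (\<Sum>j<m. c j * (real n * p j))"
    unfolding wdist_def using assms(1) by (intro sum_mono mult_left_mono) auto
  also have "\<dots> = real n * (\<Sum>j<m. p j * c j)"
    by (simp add: sum_distrib_left mult_ac)
  also have "\<dots> \<le> real n * sqrt (wsqnorm m p c)"
    using p_pos assms(2) by (intro mult_left_mono sum_le_sqrt_wsqnorm) (auto simp: less_imp_le)
  finally show ?thesis .
qed

lemma coup_E_blk_dist_le: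
  assumes "\<forall>i<m. \<forall>j<m. k i j = k j i" "(\<Sum>i<m. p i) = 1"
    and eig: "\<forall>j<m. row_mult m (Qent n p k \<beta>) a j = \<rho> * a j" and a_pos: "\<forall>i<m. a i > 0"
    and "spin_config n \<sigma>" "spin_config n \<sigma>'" "i < m"
  shows "coup_E n blk k \<beta> t (\<lambda>s s'. real (blk_dist n blk i s s')) \<sigma> \<sigma>'
    \<le> real n * sqrt (p i) * \<rho> ^ t"
proof -
  define e where "e j = (if j = i then 1 else 0 :: real)" for j
  let ?R = "row_mult m (Qent n p k \<beta>)"
  have e_nonneg: "\<forall>j<m. e j \<ge> 0"
    by (simp add: e_def)
  have "wdist n blk m e s s' = (\<Sum>j<m. if j = i then real (blk_dist n blk j s s') else 0)" for s s'
    unfolding wdist_def e_def by (intro sum.cong) auto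
  then have "(\<lambda>s s'. real (blk_dist n blk i s s')) = wdist n blk m e"
    using \<open>i < m\<close> by (simp add: fun_eq_iff)
  then have "coup_E n blk k \<beta> t (\<lambda>s s'. real (blk_dist n blk i s s')) \<sigma> \<sigma>'
      \<le> wdist n blk m ((?R ^^ t) e) \<sigma> \<sigma>'"
    using coup_E_wdist_le[OF e_nonneg assms(5,6)] by simp
  also have "\<dots> \<le> real n * sqrt (wsqnorm m p ((?R ^^ t) e))"
    using row_mult_funpow_nonneg[OF Qent_nonneg e_nonneg] assms(2)
    by (intro wdist_le_sqrt_wsqnorm) blast
  also have "\<dots> \<le> real n * sqrt ((\<rho>\<^sup>2) ^ t * wsqnorm m p e)"
    using assms(1) Qent_reversible Qent_nonneg a_pos p_pos
    by (intro mult_left_mono real_sqrt_le_mono wsqnorm_row_mult_funpow_le[OF eig])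
      (auto simp: less_imp_le)
  also have "wsqnorm m p e = (\<Sum>j<m. if j = i then p j else 0)"
    unfolding wsqnorm_def e_def by (intro sum.cong) auto
  also have "\<dots> = p i"
    using \<open>i < m\<close> by simp
  also have "sqrt ((\<rho>\<^sup>2) ^ t * p i) = \<rho> ^ t * sqrt (p i)"
  proof -
    have "(\<rho>\<^sup>2) ^ t = (\<rho> ^ t)\<^sup>2"
      by (metis power_mult mult.commute)
    then show ?thesis
      using left_eigval_nonneg[OF eig Qent_nonneg a_pos \<open>i < m\<close>] by (simp add: real_sqrt_mult)
  qed
  finally show ?thesis
    by (simp add: mult_ac)
qed

end

theorem lemma4p5:
  fixes m n t :: nat and p :: "nat \<Rightarrow> real" and k :: "nat \<Rightarrow> nat \<Rightarrow> real"
    and \<beta> \<rho> :: real and blk :: "nat \<Rightarrow> nat" and \<sigma> \<sigma>' :: "nat \<Rightarrow> int" and a :: "real vec"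
  assumes "m \<ge> 1"
    and "\<forall>i<m. p i > 0" and "(\<Sum>i<m. p i) = 1"
    and "\<forall>i<m. \<forall>j<m. k i j = k j i" and "\<forall>i<m. \<forall>j<m. k i j > 0"
    and "\<beta> \<ge> 0" and "n \<ge> 1"
    and "\<forall>v\<in>{1..n}. blk v < m"
    and "\<forall>i<m. real (card {v\<in>{1..n}. blk v = i}) = real n * p i"
    and "\<forall>v\<in>{1..n}. \<sigma> v \<in> {-1, 1}" and "\<forall>v\<in>{1..n}. \<sigma>' v \<in> {-1, 1}"
    and "eigenvalue (Qmat m n p k \<beta>) \<rho>"
    and "\<forall>\<mu>. eigenvalue (Qmat m n p k \<beta>) \<mu> \<longrightarrow> \<mu> \<le> \<rho>"
    and "a \<in> carrier_vec m" and "\<forall>i<m. a $ i > 0" and "(\<Sum>i<m. \<bar>a $ i\<bar>) = 1"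
    and "transpose_mat (Qmat m n p k \<beta>) *\<^sub>v a = \<rho> \<cdot>\<^sub>v a"
  shows "coup_E n blk k \<beta> t (\<lambda>s s'. \<Sum>i<m. a $ i * real (blk_dist n blk i s s')) \<sigma> \<sigma>'
           \<le> \<rho> ^ t * (\<Sum>i<m. a $ i * real (blk_dist n blk i \<sigma> \<sigma>'))
         \<and> (\<forall>i<m. coup_E n blk k \<beta> t (\<lambda>s s'. real (blk_dist n blk i s s')) \<sigma> \<sigma>'
                    \<le> real n * sqrt (p i) * \<rho> ^ t)"
proof
  interpret block_glauber m n p k \<beta> blk
    using assms by unfold_locales auto
  have spins: "spin_config n \<sigma>" "spin_config n \<sigma>'"
    using assms(10,11) by (auto simp: spin_config_def)
  have eig: "\<forall>j<m. row_mult m (Qent n p k \<beta>) (\<lambda>i. a $ i) j = \<rho> * a $ j"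
    using Qmat_left_eigvec[OF assms(14,17)] .
  have "coup_E n blk k \<beta> t (wdist n blk m (\<lambda>i. a $ i)) \<sigma> \<sigma>'
      \<le> wdist n blk m ((row_mult m (Qent n p k \<beta>) ^^ t) (\<lambda>i. a $ i)) \<sigma> \<sigma>'"
    using assms(15) by (intro coup_E_wdist_le spins) (simp add: less_imp_le)
  also have "\<dots> = \<rho> ^ t * wdist n blk m (\<lambda>i. a $ i) \<sigma> \<sigma>'"
    using row_mult_funpow_left_eigvec[OF eig]
    by (simp add: wdist_def sum_distrib_left mult_ac)
  finally show "coup_E n blk k \<beta> t (\<lambda>s s'. \<Sum>i<m. a $ i * real (blk_dist n blk i s s')) \<sigma> \<sigma>'
      \<le> \<rho> ^ t * (\<Sum>i<m. a $ i * real (blk_dist n blk i \<sigma> \<sigma>'))"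
    by (simp add: wdist_def[abs_def])
  show "\<forall>i<m. coup_E n blk k \<beta> t (\<lambda>s s'. real (blk_dist n blk i s s')) \<sigma> \<sigma>'
      \<le> real n * sqrt (p i) * \<rho> ^ t"
    using coup_E_blk_dist_le[OF assms(4,3) eig _ spins] assms(15) by blast
qed

end
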